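(* Let $(u_{n-1},u_{n-2},\dots,u_0)$ be a chain compatible with $(n-1,n-2,\dots,1)$ with $u_0=w_0$. Then $u_i\in S_n^{i\searrow}$ for every $i\in\{0,\dots,n-1\}$.
   Context: Permutations in one-line notation; $w_0=[n,\dots,1]$; $wt_{i,j}$ is $w$ with positions $i<j$ swapped; $\ell$ the number of inversions. $u\lessdot w$ iff $w=ut_{i,j}$, $i<j$, $\ell(w)=\ell(u)+1$; $u\lessdot_k w$ iff moreover $i\le k<j$. A $k$-chain $v_1\lessdot_k\cdots\lessdot_k v_d$ ($d\ge 1$) is increasing if the smaller of the two values exchanged at each step strictly increases along the chain. $(w_1,\dots,w_d)$ is compatible with $(k_1,\dots,k_{d-1})$ if for each $s$ there is an increasing $k_s$-chain from $w_s$ to $w_{s+1}$. $S_n^{k\searrow}=\{v\in S_n:v(k+1)>\dots>v(n)\}$ for $k\in\{0,\dots,n-1\}$. *)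

theory Defs
  imports "HOL-Combinatorics.Combinatorics"
begin

text \<open>Permutations of {1..n} in one-line notation: a function w with
  w permutes {1..n}; the entry at position i is w i.\<close>

definition inv_len :: "nat \<Rightarrow> (nat \<Rightarrow> nat) \<Rightarrow> nat" where
  "inv_len n w = card {(i, j). 1 \<le> i \<and> i < j \<and> j \<le> n \<and> w i > w j}"

definition wlong :: "nat \<Rightarrow> nat \<Rightarrow> nat" where
  "wlong n = (\<lambda>i. if 1 \<le> i \<and> i \<le> n then n + 1 - i else i)"

definition kcover_at :: "nat \<Rightarrow> nat \<Rightarrow> (nat \<Rightarrow> nat) \<Rightarrow> (nat \<Rightarrow> nat) \<Rightarrow> nat \<Rightarrow> nat \<Rightarrow> bool" where
  "kcover_at n k u w i j \<longleftrightarrow>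
     1 \<le> i \<and> i \<le> k \<and> k < j \<and> j \<le> n \<and>
     w = u \<circ> Transposition.transpose i j \<and> inv_len n w = inv_len n u + 1"

text \<open>Increasing k-chain v_1 <.k ... <.k v_d (d >= 1) from x to y: the list vs of
  permutations with the positions ps of each step; the smaller of the two exchanged values
  strictly increases along the chain.\<close>
definition incr_kchain :: "nat \<Rightarrow> nat \<Rightarrow> (nat \<Rightarrow> nat) \<Rightarrow> (nat \<Rightarrow> nat) \<Rightarrow> bool" where
  "incr_kchain n k x y \<longleftrightarrow>
     (\<exists>vs ps. vs \<noteq> [] \<and> length ps = length vs - 1 \<and> hd vs = x \<and> last vs = y \<and>
        (\<forall>v\<in>set vs. v permutes {1..n}) \<and>
        (\<forall>s < length ps. kcover_at n k (vs ! s) (vs ! Suc s) (fst (ps ! s)) (snd (ps ! s))) \<and>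
        (\<forall>s. Suc s < length ps \<longrightarrow>
           min ((vs ! s) (fst (ps ! s))) ((vs ! s) (snd (ps ! s)))
           < min ((vs ! Suc s) (fst (ps ! Suc s))) ((vs ! Suc s) (snd (ps ! Suc s)))))"

definition S_desc :: "nat \<Rightarrow> nat \<Rightarrow> (nat \<Rightarrow> nat) set" where
  "S_desc n k = {v. v permutes {1..n} \<and> (\<forall>a b. k + 1 \<le> a \<and> a < b \<and> b \<le> n \<longrightarrow> v a > v b)}"

end

theory Submission
  imports Defs
begin

(* For a < b and u a < u b, the length formula
     inv_len (u t_{a,b}) = inv_len u + 1 + 2 #{a < p < b. u a < u p < u b}
   shows that u t_{a,b} covers u iff u a < u b and no value at a position strictly
   between a and b lies between u a and u b.  So if a <= k < b and u t_{a,b} is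
   decreasing on the positions k+1..n, then so is u: of a and b only b lies in that
   range, its value rises from u a to u b, and the no-between condition keeps it below
   the values at the positions k+1..b-1.  Walking down the chain from u 0 = w0, which
   is decreasing everywhere, u (i-1) is decreasing after position i-1, hence after i,
   and the i-chain from u i to u (i-1) carries this back to u i. *)

definition index_pairs :: "nat \<Rightarrow> (nat \<times> nat) set" where
  "index_pairs n = {(i, j). 1 \<le> i \<and> i < j \<and> j \<le> n}"

definition reversed_pairs :: "nat \<Rightarrow> nat \<Rightarrow> (nat \<times> nat) set" where
  "reversed_pairs a b = insert (a, b) ((\<lambda>p. (a, p)) ` {a<..<b} \<union> (\<lambda>p. (p, b)) ` {a<..<b})"

lemma finite_index_pairs: "finite (index_pairs n)"
  by (rule finite_subset[of _ "{1..n} \<times> {1..n}"]) (auto simp: index_pairs_def)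

lemma inv_len_eq_sum: "inv_len n w = (\<Sum>q\<in>index_pairs n. of_bool (w (snd q) < w (fst q)))"
proof -
  have "inv_len n w = card (index_pairs n \<inter> {q. w (snd q) < w (fst q)})"
    unfolding inv_len_def index_pairs_def by (rule arg_cong[where f = card]) auto
  then show ?thesis
    by (simp add: finite_index_pairs)
qed

lemma reversed_pairs_subset:
  "1 \<le> a \<Longrightarrow> a < b \<Longrightarrow> b \<le> n \<Longrightarrow> reversed_pairs a b \<subseteq> index_pairs n"
  by (auto simp: reversed_pairs_def index_pairs_def)

lemma preserved_pairs_iff:
  assumes "a < b"
  shows "q \<in> index_pairs n - reversed_pairs a b \<longleftrightarrow>
    q \<in> index_pairs n \<and> Transposition.transpose a b (fst q) < Transposition.transpose a b (snd q)"
  using assms by (cases q) (auto simp: index_pairs_def reversed_pairs_def transpose_def)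

lemma sum_preserved_pairs:
  assumes "1 \<le> a" "a < b" "b \<le> n"
  defines "\<tau> \<equiv> Transposition.transpose a b"
  shows "(\<Sum>q\<in>index_pairs n - reversed_pairs a b. g (\<tau> (fst q), \<tau> (snd q)))
       = (\<Sum>q\<in>index_pairs n - reversed_pairs a b. g q)"
proof -
  have "\<tau> i \<in> {1..n}" if "i \<in> {1..n}" for i
    using that assms by (auto simp: transpose_def)
  then have "(\<tau> (fst q), \<tau> (snd q)) \<in> index_pairs n - reversed_pairs a b"
    if "q \<in> index_pairs n - reversed_pairs a b" for q
    using that unfolding preserved_pairs_iff[OF \<open>a < b\<close>] \<tau>_def by (auto simp: index_pairs_def)
  then show ?thesis
    by (intro sum.reindex_bij_witness[where i = "\<lambda>q. (\<tau> (fst q), \<tau> (snd q))"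
                                         and j = "\<lambda>q. (\<tau> (fst q), \<tau> (snd q))"])
      (auto simp: \<tau>_def)
qed

lemma sum_reversed_pairs:
  assumes "a < b"
  shows "(\<Sum>q\<in>reversed_pairs a b. g q) = g (a, b) + (\<Sum>p\<in>{a<..<b}. g (a, p) + g (p, b))"
proof -
  have "(\<Sum>q\<in>(\<lambda>p. (a, p)) ` {a<..<b} \<union> (\<lambda>p. (p, b)) ` {a<..<b}. g q)
      = (\<Sum>p\<in>{a<..<b}. g (a, p)) + (\<Sum>p\<in>{a<..<b}. g (p, b))"
    by (subst sum.union_disjoint) (auto simp: sum.reindex inj_on_def)
  then show ?thesis
    unfolding reversed_pairs_def by (subst sum.insert) (auto simp: sum.distrib)
qed

lemma inv_len_comp_transpose:
  assumes "1 \<le> a" "a < b" "b \<le> n" and inj: "inj_on u {a..b}" and "u a < u b"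
  shows "inv_len n (u \<circ> Transposition.transpose a b)
       = inv_len n u + 1 + 2 * card {p \<in> {a<..<b}. u a < u p \<and> u p < u b}"
proof -
  define w where "w = u \<circ> Transposition.transpose a b"
  define P where "P = index_pairs n - reversed_pairs a b"
  have split: "inv_len n g = (\<Sum>q\<in>P. of_bool (g (snd q) < g (fst q)))
      + (\<Sum>q\<in>reversed_pairs a b. of_bool (g (snd q) < g (fst q)))" for g
    unfolding inv_len_eq_sum P_def
    using sum.subset_diff[OF reversed_pairs_subset finite_index_pairs] assms(1-3) by blast
  have preserved: "(\<Sum>q\<in>P. of_bool (w (snd q) < w (fst q))) = (\<Sum>q\<in>P. of_bool (u (snd q) < u (fst q)))"
    unfolding P_def w_def
    using sum_preserved_pairs[OF assms(1-3), of "\<lambda>q. of_bool (u (snd q) < u (fst q))"] by simp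
  have w_ends: "w a = u b" "w b = u a"
    by (simp_all add: w_def)
  have w_between: "(\<Sum>p\<in>{a<..<b}. of_bool (w p < w a) + of_bool (w b < w p))
      = (\<Sum>p\<in>{a<..<b}. of_bool (u p < u b) + of_bool (u a < u p))"
    by (rule sum.cong) (auto simp: w_def)
  have "of_bool (u p < u b) + of_bool (u a < u p)
      = (of_bool (u p < u a) + of_bool (u b < u p) + 2 * of_bool (u a < u p \<and> u p < u b) :: nat)"
    if "p \<in> {a<..<b}" for p
  proof -
    have "u p \<noteq> u a" "u p \<noteq> u b"
      using that inj by (auto dest: inj_onD)
    then show ?thesis
      using \<open>u a < u b\<close> by auto
  qed
  then have "(\<Sum>p\<in>{a<..<b}. of_bool (u p < u b) + of_bool (u a < u p))
      = (\<Sum>p\<in>{a<..<b}. of_bool (u p < u a) + of_bool (u b < u p))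
        + 2 * card {p \<in> {a<..<b}. u a < u p \<and> u p < u b}"
    by (simp add: sum.distrib flip: sum_distrib_left) (simp add: Int_def)
  then have "(\<Sum>q\<in>reversed_pairs a b. of_bool (w (snd q) < w (fst q)))
      = (\<Sum>q\<in>reversed_pairs a b. of_bool (u (snd q) < u (fst q))) + 1
        + 2 * card {p \<in> {a<..<b}. u a < u p \<and> u p < u b}"
    unfolding sum_reversed_pairs[OF \<open>a < b\<close>] fst_conv snd_conv w_between
    using \<open>u a < u b\<close> by (simp add: w_ends)
  then show ?thesis
    using split[of w] split[of u] preserved by (simp add: w_def)
qed

lemma inv_len_comp_transpose_eq_Suc_iff:
  assumes "1 \<le> a" "a < b" "b \<le> n" and inj: "inj_on u {a..b}"
  shows "inv_len n (u \<circ> Transposition.transpose a b) = Suc (inv_len n u) \<longleftrightarrow>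
    u a < u b \<and> (\<forall>p\<in>{a<..<b}. \<not> (u a < u p \<and> u p < u b))"
proof (cases "u a < u b")
  case True
  then show ?thesis
    using inv_len_comp_transpose[OF assms True] by auto
next
  case False
  define \<tau> where "\<tau> = Transposition.transpose a b"
  have "u a \<noteq> u b"
    using inj \<open>a < b\<close> by (auto dest: inj_onD)
  with False have "(u \<circ> \<tau>) a < (u \<circ> \<tau>) b"
    by (simp add: \<tau>_def)
  moreover have "inj_on (u \<circ> \<tau>) {a..b}"
    using inj \<open>a < b\<close> by (intro comp_inj_on) (simp_all add: \<tau>_def)
  ultimately have "inv_len n (u \<circ> \<tau> \<circ> \<tau>) > inv_len n (u \<circ> \<tau>)"
    using inv_len_comp_transpose[OF assms(1-3)] unfolding \<tau>_def by fastforce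
  then show ?thesis
    using False by (simp add: \<tau>_def comp_assoc)
qed

lemma kcover_at_strict_antimono_tail:
  assumes cover: "kcover_at n k u w a b" and "u permutes {1..n}"
    and w_tail: "strict_antimono_on {Suc k..n} w"
  shows "strict_antimono_on {Suc k..n} u"
proof (rule monotone_onI)
  have ab: "1 \<le> a" "a \<le> k" "k < b" "b \<le> n"
    and w: "w = u \<circ> Transposition.transpose a b"
    using cover by (simp_all add: kcover_at_def)
  have inj: "inj_on u {1..n}"
    using \<open>u permutes {1..n}\<close> by (rule permutes_inj_on)
  then have "inj_on u {a..b}"
    by (rule inj_on_subset) (use ab in auto)
  then have "u a < u b" and no_between: "\<And>p. a < p \<Longrightarrow> p < b \<Longrightarrow> \<not> (u a < u p \<and> u p < u b)"
    using cover inv_len_comp_transpose_eq_Suc_iff[of a b n u] ab by (auto simp: kcover_at_def)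
  have w_desc: "w y < w x" if "Suc k \<le> x" "x < y" "y \<le> n" for x y
    using w_tail that by (simp add: monotone_on_def)
  fix x y assume xy: "x \<in> {Suc k..n}" "y \<in> {Suc k..n}" "x < y"
  consider "x = b" | "y = b" | "x \<noteq> b" "y \<noteq> b" by blast
  then show "u y < u x"
  proof cases
    case 1
    then have "u y = w y" "w b = u a"
      using xy ab by (auto simp: w)
    then show ?thesis
      using w_desc[of x y] xy 1 \<open>u a < u b\<close> by auto
  next
    case 2
    then have "u a < u x"
      using w_desc[of x y] xy ab by (auto simp: w)
    moreover have "u x \<noteq> u b"
      using inj xy 2 ab by (auto dest: inj_onD)
    ultimately show ?thesis
      using no_between[of x] xy 2 ab by auto
  qed (use w_desc[of x y] xy ab in \<open>auto simp: w\<close>)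
qed

lemma incr_kchain_strict_antimono_tail:
  assumes "incr_kchain n k x y" and y_tail: "strict_antimono_on {Suc k..n} y"
  shows "x permutes {1..n} \<and> strict_antimono_on {Suc k..n} x"
proof -
  obtain vs ps where vs: "vs \<noteq> []" "length ps = length vs - 1" "hd vs = x" "last vs = y"
    and perms: "\<forall>v\<in>set vs. v permutes {1..n}"
    and covers: "\<forall>s < length ps. kcover_at n k (vs ! s) (vs ! Suc s) (fst (ps ! s)) (snd (ps ! s))"
    using \<open>incr_kchain n k x y\<close> unfolding incr_kchain_def by blast
  have "strict_antimono_on {Suc k..n} (vs ! s)" if "s \<le> length vs - 1" for s
    using that
  proof (induction s rule: inc_induct)
    case base
    then show ?case
      using y_tail vs by (simp add: last_conv_nth)
  next
    case (step s)
    have "vs ! s permutes {1..n}"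
      using perms step.hyps by auto
    then show ?case
      using kcover_at_strict_antimono_tail covers vs(2) step by auto
  qed
  then show ?thesis
    using vs perms by (auto simp: hd_conv_nth)
qed

lemma wlong_permutes: "wlong n permutes {1..n}"
proof (rule bij_imp_permutes)
  have "wlong n (wlong n i) = i" for i
    by (auto simp: wlong_def)
  then show "bij_betw (wlong n) {1..n} {1..n}"
    by (intro bij_betwI[where g = "wlong n"]) (auto simp: wlong_def)
qed (auto simp: wlong_def)

lemma strict_antimono_on_wlong: "strict_antimono_on {1..n} (wlong n)"
  by (auto simp: monotone_on_def wlong_def)

lemma S_desc_iff: "v \<in> S_desc n k \<longleftrightarrow> v permutes {1..n} \<and> strict_antimono_on {Suc k..n} v"
  by (auto simp: S_desc_def monotone_on_def)

theorem corollary3p8: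
  fixes n :: nat and u :: "nat \<Rightarrow> nat \<Rightarrow> nat"
  assumes compat: "\<forall>i. 1 \<le> i \<and> i \<le> n - 1 \<longrightarrow> incr_kchain n i (u i) (u (i - 1))"
    and u0: "u 0 = wlong n"
  shows "\<forall>i < n. u i \<in> S_desc n i"
proof (intro allI impI)
  fix i assume "i < n"
  then have "u i permutes {1..n} \<and> strict_antimono_on {Suc i..n} (u i)"
  proof (induction i)
    case 0
    show ?case
      using u0 wlong_permutes strict_antimono_on_wlong by simp
  next
    case (Suc i)
    then have "strict_antimono_on {Suc (Suc i)..n} (u i)"
      by (auto intro: monotone_on_subset)
    moreover have "incr_kchain n (Suc i) (u (Suc i)) (u i)"
      using compat[rule_format, of "Suc i"] Suc.prems by simp
    ultimately show ?case
      using incr_kchain_strict_antimono_tail by blast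
  qed
  then show "u i \<in> S_desc n i"
    by (simp add: S_desc_iff)
qed

end
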